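(* Consider a switching non-stationary Markov reward process as described in the context. Let $\mathcal{X}=\{(s,s',e)\in\mathcal{S}\times\mathcal{S}\times\mathcal{E}: p_e(s'\mid s)>0\}$. Then the sequence $X_k=(S_k,S_{k+1},E_k)$ is a Markov chain on $\mathcal{X}$ whose transition probability from $x=(s_1,s_2,e)$ to $x'=(s_1',s_2',e')$ is $$z(x'\mid x)=\begin{cases}p_{e'}(s_2'\mid s_2)\,q(e'\mid e)&\text{if } s_2=s_1',\\ 0&\text{otherwise.}\end{cases}$$
   Context: The process has a finite state set $\mathcal{S}$, a finite set of environment states $\mathcal{E}$, for each $e\in\mathcal{E}$ a transition probability function $p_e(s'\mid s)$ on $\mathcal{S}$, and a Markov chain on $\mathcal{E}$ with transition probabilities $q(e'\mid e)$. It generates $(S_k,E_k)_{k\ge0}$ from an arbitrary initial distribution such that, given the entire past $(S_0,E_0,\dots,S_k,E_k)$, $S_{k+1}\sim p_{E_k}(\cdot\mid S_k)$ and $E_{k+1}\sim q(\cdot\mid E_k)$ independently. *)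

theory Defs
  imports "HOL-Probability.Probability"
begin

text \<open>Transition kernels are functions: p e s s' stands for p_e(s' | s), q e e' for q(e' | e).\<close>

definition stochastic :: "('a \<Rightarrow> 'a \<Rightarrow> real) \<Rightarrow> bool" where
  "stochastic P \<longleftrightarrow> (\<forall>x y. 0 \<le> P x y) \<and> (\<forall>x. (\<Sum>y\<in>UNIV. P x y) = 1)"

definition Xset :: "('e \<Rightarrow> 's \<Rightarrow> 's \<Rightarrow> real) \<Rightarrow> ('s \<times> 's \<times> 'e) set" where
  "Xset p = {(s, s', e). p e s s' > 0}"

definition ztrans :: "('e \<Rightarrow> 's \<Rightarrow> 's \<Rightarrow> real) \<Rightarrow> ('e \<Rightarrow> 'e \<Rightarrow> real)
    \<Rightarrow> ('s \<times> 's \<times> 'e) \<Rightarrow> ('s \<times> 's \<times> 'e) \<Rightarrow> real" where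
  "ztrans p q x x' = (case x of (s1, s2, e) \<Rightarrow> case x' of (s1', s2', e') \<Rightarrow>
      if s2 = s1' then p e' s2 s2' * q e e' else 0)"

end

theory Submission
  imports Defs
begin

text \<open>Summing the one-step law over the next environment shows that, given the history of S and E
  up to time k, S_(k+1) has law p_(E_k)(. | S_k); so each X_k avoids the transitions of probability
  zero almost surely.  A path x_0, ..., x_k of X can only be followed if it is chained, i.e. the second
  state of x_i is the first state of x_(i+1).  The event that X follows a chained path is a history
  cylinder of (S, E) up to time k intersected with the event that S_(k+1) is the second state of x_k,
  so its probability is a product of one-step probabilities; comparing these products at times k
  and k+1 gives the Markov property of X with kernel z.\<close>

lemma stochastic_nonneg: "stochastic P \<Longrightarrow> 0 \<le> P x y"
  by (simp add: stochastic_def)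

lemma stochastic_sum: "stochastic P \<Longrightarrow> (\<Sum>y\<in>UNIV. P x y) = 1"
  by (simp add: stochastic_def)

lemma ztrans_nonneg:
  assumes "\<And>e. stochastic (p e)" and "stochastic q"
  shows "0 \<le> ztrans p q x x'"
  using assms by (auto simp: ztrans_def stochastic_nonneg split: prod.split)

lemma ztrans_eq_0_outside_Xset:
  assumes "\<And>e. stochastic (p e)" and "x' \<notin> Xset p"
  shows "ztrans p q x x' = 0"
proof -
  obtain s1' s2' e' where x': "x' = (s1', s2', e')" by (cases x')
  have "p e' s1' s2' = 0"
    using assms stochastic_nonneg[of "p e'" s1' s2'] by (auto simp: x' Xset_def)
  then show ?thesis by (auto simp: ztrans_def x' split: prod.split)
qed

lemma sum_ztrans_Xset:
  fixes p :: "'e::finite \<Rightarrow> 's::finite \<Rightarrow> 's \<Rightarrow> real"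
  assumes p: "\<And>e. stochastic (p e)" and q: "stochastic q"
  shows "(\<Sum>x'\<in>Xset p. ztrans p q (s1, s2, e) x') = 1"
proof -
  have "(\<Sum>x'\<in>Xset p. ztrans p q (s1, s2, e) x') = (\<Sum>x'\<in>UNIV. ztrans p q (s1, s2, e) x')"
    by (rule sum.mono_neutral_left) (auto simp: ztrans_eq_0_outside_Xset p)
  also have "\<dots> = (\<Sum>s1'\<in>UNIV. \<Sum>s2'\<in>UNIV. \<Sum>e'\<in>UNIV. ztrans p q (s1, s2, e) (s1', s2', e'))"
    by (simp add: sum.cartesian_product UNIV_Times_UNIV[symmetric] del: UNIV_Times_UNIV)
  also have "\<dots> = (\<Sum>s1'\<in>UNIV. if s1' = s2 then \<Sum>s2'\<in>UNIV. \<Sum>e'\<in>UNIV. p e' s2 s2' * q e e' else 0)"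
    by (rule sum.cong[OF refl]) (auto simp: ztrans_def)
  also have "\<dots> = (\<Sum>s2'\<in>UNIV. \<Sum>e'\<in>UNIV. p e' s2 s2' * q e e')"
    by simp
  also have "\<dots> = (\<Sum>e'\<in>UNIV. q e e' * (\<Sum>s2'\<in>UNIV. p e' s2 s2'))"
    by (subst sum.swap) (simp add: sum_distrib_left mult.commute)
  also have "\<dots> = 1"
    by (simp add: stochastic_sum p q)
  finally show ?thesis .
qed

locale switching_process = prob_space M
  for M :: "'a measure"
    and p :: "'e::finite \<Rightarrow> 's::finite \<Rightarrow> 's \<Rightarrow> real" and q :: "'e \<Rightarrow> 'e \<Rightarrow> real"
    and S :: "nat \<Rightarrow> 'a \<Rightarrow> 's" and E :: "nat \<Rightarrow> 'a \<Rightarrow> 'e" +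
  assumes p_stochastic: "\<And>e. stochastic (p e)" and q_stochastic: "stochastic q"
    and measurable_S [measurable]: "\<And>k. S k \<in> measurable M (count_space UNIV)"
    and measurable_E [measurable]: "\<And>k. E k \<in> measurable M (count_space UNIV)"
    and measure_step: "\<And>k ss es s' e'.
           measure M {\<omega> \<in> space M. (\<forall>i\<le>k. S i \<omega> = ss i \<and> E i \<omega> = es i)
                                  \<and> S (Suc k) \<omega> = s' \<and> E (Suc k) \<omega> = e'}
         = measure M {\<omega> \<in> space M. \<forall>i\<le>k. S i \<omega> = ss i \<and> E i \<omega> = es i}
             * p (es k) (ss k) s' * q (es k) e'"
begin

definition X :: "nat \<Rightarrow> 'a \<Rightarrow> 's \<times> 's \<times> 'e" where
  "X k \<omega> = (S k \<omega>, S (Suc k) \<omega>, E k \<omega>)"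

definition cylinder :: "nat \<Rightarrow> (nat \<Rightarrow> 's) \<Rightarrow> (nat \<Rightarrow> 'e) \<Rightarrow> 'a set" where
  "cylinder k ss es = {\<omega> \<in> space M. \<forall>i\<le>k. S i \<omega> = ss i \<and> E i \<omega> = es i}"

lemma sets_cylinder [measurable]: "cylinder k ss es \<in> sets M"
  unfolding cylinder_def by measurable

lemma cylinder_fun_upd_Suc [simp]: "cylinder k (ss(Suc k := s)) (es(Suc k := e)) = cylinder k ss es"
  by (auto simp: cylinder_def)

lemma cylinder_Suc:
  "cylinder (Suc k) ss es = {\<omega> \<in> cylinder k ss es. S (Suc k) \<omega> = ss (Suc k) \<and> E (Suc k) \<omega> = es (Suc k)}"
  by (auto simp: cylinder_def le_Suc_eq)

lemma measure_cylinder_Suc: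
  "measure M (cylinder (Suc k) ss es)
     = measure M (cylinder k ss es) * p (es k) (ss k) (ss (Suc k)) * q (es k) (es (Suc k))"
  unfolding cylinder_Suc using measure_step[of k ss es "ss (Suc k)" "es (Suc k)"]
  by (simp add: cylinder_def conj_assoc)

lemma measure_cylinder_next_state:
  "measure M {\<omega> \<in> cylinder k ss es. S (Suc k) \<omega> = s'} = measure M (cylinder k ss es) * p (es k) (ss k) s'"
proof -
  have "{\<omega> \<in> cylinder k ss es. S (Suc k) \<omega> = s'} = (\<Union>e'. cylinder (Suc k) (ss(Suc k := s')) (es(Suc k := e')))"
    by (auto simp: cylinder_Suc)
  moreover have "disjoint_family (\<lambda>e'. cylinder (Suc k) (ss(Suc k := s')) (es(Suc k := e')))"
    by (auto simp: disjoint_family_on_def cylinder_def)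
  ultimately have "measure M {\<omega> \<in> cylinder k ss es. S (Suc k) \<omega> = s'}
      = (\<Sum>e'\<in>UNIV. measure M (cylinder (Suc k) (ss(Suc k := s')) (es(Suc k := e'))))"
    by (simp only:) (intro finite_measure_finite_Union; auto)
  also have "\<dots> = (\<Sum>e'\<in>UNIV. measure M (cylinder k ss es) * p (es k) (ss k) s' * q (es k) e')"
    by (simp add: measure_cylinder_Suc)
  also have "\<dots> = measure M (cylinder k ss es) * p (es k) (ss k) s'"
    by (simp add: sum_distrib_left[symmetric] stochastic_sum q_stochastic)
  finally show ?thesis .
qed

lemma AE_X_in_Xset: "AE \<omega> in M. X k \<omega> \<in> Xset p"
proof -
  \<comment> \<open>a cylinder up to time k only depends on the histories restricted to {..k}, so finitely many
    null cylinders cover the exceptional event\<close>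
  define I where "I = {(ss, es, s'). ss \<in> (\<Pi>\<^sub>E i\<in>{..k}. UNIV) \<and> es \<in> (\<Pi>\<^sub>E i\<in>{..k}. UNIV)
                                    \<and> p (es k) (ss k) s' = 0}"
  have "finite I"
  proof (rule finite_subset)
    show "I \<subseteq> (\<Pi>\<^sub>E i\<in>{..k}. UNIV) \<times> (\<Pi>\<^sub>E i\<in>{..k}. UNIV) \<times> UNIV"
      by (auto simp: I_def)
    show "finite ((\<Pi>\<^sub>E i\<in>{..k}. UNIV :: 's set) \<times> (\<Pi>\<^sub>E i\<in>{..k}. UNIV :: 'e set) \<times> (UNIV :: 's set))"
      by (intro finite_SigmaI finite_PiE) auto
  qed
  have null: "(\<Union>(ss, es, s')\<in>I. {\<omega> \<in> cylinder k ss es. S (Suc k) \<omega> = s'}) \<in> null_sets M"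
  proof (rule null_sets_UN')
    show "countable I"
      using \<open>finite I\<close> by (rule countable_finite)
  next
    fix i assume "i \<in> I"
    then obtain ss es s' where "i = (ss, es, s')" "p (es k) (ss k) s' = 0"
      by (auto simp: I_def)
    moreover have "{\<omega> \<in> cylinder k ss es. S (Suc k) \<omega> = s'} \<in> sets M"
      by measurable
    ultimately show "(case i of (ss, es, s') \<Rightarrow> {\<omega> \<in> cylinder k ss es. S (Suc k) \<omega> = s'}) \<in> null_sets M"
      using measure_cylinder_next_state[of k ss es s'] by (simp add: emeasure_eq_measure null_sets_def)
  qed
  show ?thesis
  proof (rule AE_I'[OF null], safe)
    fix \<omega> assume \<omega>: "\<omega> \<in> space M" "X k \<omega> \<notin> Xset p"
    have "p (E k \<omega>) (S k \<omega>) (S (Suc k) \<omega>) = 0"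
      using \<omega>(2) stochastic_nonneg[OF p_stochastic] by (auto simp: X_def Xset_def order_less_le)
    with \<omega>(1) show "\<omega> \<in> (\<Union>(ss, es, s')\<in>I. {\<omega> \<in> cylinder k ss es. S (Suc k) \<omega> = s'})"
      by (intro UN_I[of "(restrict (\<lambda>i. S i \<omega>) {..k}, restrict (\<lambda>i. E i \<omega>) {..k}, S (Suc k) \<omega>)"])
        (auto simp: I_def cylinder_def)
  qed
qed

lemma X_path_eq_cylinder:
  assumes "\<And>i. i < k \<Longrightarrow> b i = a (Suc i)"
  shows "{\<omega> \<in> space M. \<forall>i\<le>k. X i \<omega> = (a i, b i, c i)} = {\<omega> \<in> cylinder k a c. S (Suc k) \<omega> = b k}"
  using assms by (auto simp: X_def cylinder_def) (metis Suc_le_eq le_neq_implies_less)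

lemma X_path_eq_empty:
  assumes "j < k" and "b j \<noteq> a (Suc j)"
  shows "{\<omega> \<in> space M. \<forall>i\<le>k. X i \<omega> = (a i, b i, c i)} = {}"
proof -
  have "b j = a (Suc j)" if "\<forall>i\<le>k. X i \<omega> = (a i, b i, c i)" for \<omega>
    using that[rule_format, of j] that[rule_format, of "Suc j"] assms(1) by (simp add: X_def)
  then show ?thesis
    using assms(2) by blast
qed

lemma measure_X_path:
  "measure M {\<omega> \<in> space M. \<forall>i\<le>k. X i \<omega> = (a i, b i, c i)}
     = (if \<forall>i<k. b i = a (Suc i) then measure M (cylinder k a c) * p (c k) (a k) (b k) else 0)"
proof (cases "\<forall>i<k. b i = a (Suc i)")
  case True
  then show ?thesis
    by (simp add: X_path_eq_cylinder measure_cylinder_next_state)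
next
  case False
  then obtain j where "j < k" "b j \<noteq> a (Suc j)"
    by auto
  then have "{\<omega> \<in> space M. \<forall>i\<le>k. X i \<omega> = (a i, b i, c i)} = {}"
    by (rule X_path_eq_empty)
  with False show ?thesis
    by (simp only: measure_empty if_False)
qed

lemma measure_X_step:
  "measure M {\<omega> \<in> space M. (\<forall>i\<le>k. X i \<omega> = xs i) \<and> X (Suc k) \<omega> = x'}
     = measure M {\<omega> \<in> space M. \<forall>i\<le>k. X i \<omega> = xs i} * ztrans p q (xs k) x'"
proof -
  define ys where "ys = xs(Suc k := x')"
  define a b c where "a i = fst (ys i)" and "b i = fst (snd (ys i))" and "c i = snd (snd (ys i))" for i
  have ys: "ys i = (a i, b i, c i)" for i
    by (simp add: a_def b_def c_def)
  have "{\<omega> \<in> space M. (\<forall>i\<le>k. X i \<omega> = xs i) \<and> X (Suc k) \<omega> = x'}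
      = {\<omega> \<in> space M. \<forall>i\<le>Suc k. X i \<omega> = (a i, b i, c i)}"
    by (auto simp: ys[symmetric] ys_def le_Suc_eq)
  moreover have "{\<omega> \<in> space M. \<forall>i\<le>k. X i \<omega> = xs i} = {\<omega> \<in> space M. \<forall>i\<le>k. X i \<omega> = (a i, b i, c i)}"
    by (auto simp: ys[symmetric] ys_def)
  moreover have "ztrans p q (xs k) x'
      = (if b k = a (Suc k) then p (c (Suc k)) (b k) (b (Suc k)) * q (c k) (c (Suc k)) else 0)"
    using ys[of k] ys[of "Suc k"] by (simp add: ys_def ztrans_def)
  moreover have "(\<forall>i<Suc k. b i = a (Suc i)) \<longleftrightarrow> (\<forall>i<k. b i = a (Suc i)) \<and> b k = a (Suc k)"
    by (auto simp: less_Suc_eq)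
  ultimately show ?thesis
    by (auto simp: measure_X_path measure_cylinder_Suc)
qed

end

theorem lemma4:
  fixes M :: "'a measure"
    and p :: "'e::finite \<Rightarrow> 's::finite \<Rightarrow> 's \<Rightarrow> real"
    and q :: "'e \<Rightarrow> 'e \<Rightarrow> real"
    and S :: "nat \<Rightarrow> 'a \<Rightarrow> 's" and E :: "nat \<Rightarrow> 'a \<Rightarrow> 'e"
  assumes "prob_space M"
    and "\<And>e. stochastic (p e)" and "stochastic q"
    and "\<And>k. S k \<in> measurable M (count_space UNIV)"
    and "\<And>k. E k \<in> measurable M (count_space UNIV)"
    and "\<And>k (ss :: nat \<Rightarrow> 's) (es :: nat \<Rightarrow> 'e) s' e'.
           measure M {\<omega> \<in> space M. (\<forall>i\<le>k. S i \<omega> = ss i \<and> E i \<omega> = es i)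
                                  \<and> S (Suc k) \<omega> = s' \<and> E (Suc k) \<omega> = e'}
         = measure M {\<omega> \<in> space M. \<forall>i\<le>k. S i \<omega> = ss i \<and> E i \<omega> = es i}
             * p (es k) (ss k) s' * q (es k) e'"
  defines "X \<equiv> \<lambda>k \<omega>. (S k \<omega>, S (Suc k) \<omega>, E k \<omega>)"
  shows "(AE \<omega> in M. \<forall>k. X k \<omega> \<in> Xset p)
    \<and> (\<forall>x\<in>Xset p. (\<forall>x'. 0 \<le> ztrans p q x x') \<and> (\<Sum>x'\<in>Xset p. ztrans p q x x') = 1)
    \<and> (\<forall>k (xs :: nat \<Rightarrow> 's \<times> 's \<times> 'e) x'.
           measure M {\<omega> \<in> space M. (\<forall>i\<le>k. X i \<omega> = xs i) \<and> X (Suc k) \<omega> = x'}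
         = measure M {\<omega> \<in> space M. \<forall>i\<le>k. X i \<omega> = xs i} * ztrans p q (xs k) x')"
proof -
  interpret sw: switching_process M p q S E
    using assms(1-6) by (simp add: switching_process_def switching_process_axioms_def)
  have X_eq: "X = sw.X"
    by (simp add: X_def sw.X_def fun_eq_iff)
  have "AE \<omega> in M. \<forall>k. X k \<omega> \<in> Xset p"
    unfolding X_eq AE_all_countable using sw.AE_X_in_Xset by blast
  moreover have "(\<forall>x'. 0 \<le> ztrans p q x x') \<and> (\<Sum>x'\<in>Xset p. ztrans p q x x') = 1" for x
    using ztrans_nonneg[OF assms(2,3)] sum_ztrans_Xset[OF assms(2,3)] by (cases x) auto
  ultimately show ?thesis
    unfolding X_eq using sw.measure_X_step by blast
qed

end
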